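(* Let $N$ be a positive integer, $L>0$, and $\zeta=(\zeta_0,\dots,\zeta_{N+2})\in\mathbb{R}^{N+3}$ with $\zeta_0>\zeta_1>\dots>\zeta_{N+1}>\zeta_{N+2}=0$. With $W^\zeta$ as defined in the context, if $\bar y=(\bar y_0,\dots,\bar y_N)\in\mathbb{R}^{N+1}$ satisfies $\bar y_k\geq0$ and $\bar y_n=0$ for some $0\leq k<n\leq N$, then \[ \frac{\partial}{\partial y_n}W^\zeta(\bar y)=0. \]
   Context: Let $e_0,\dots,e_N$ denote the standard unit vectors of $\mathbb{R}^{N+1}$ (zero-based indexing), and write $y=(y_0,\dots,y_N)$. Define for $i=0,\dots,N+1$: $x_i=-\sum_{j=0}^{i-1}\frac{\zeta_j-\zeta_{i+1}}{\sqrt{\zeta_j-\zeta_{j+1}}}e_j\in\mathbb{R}^{N+1}$; $g_i=L\sqrt{\zeta_i-\zeta_{i+1}}\,e_i$ for $i=0,\dots,N$ and $g_{N+1}=0$; $f_i=\frac L2(\zeta_i+\zeta_{i+1})$ for $i=0,\dots,N$ and $f_{N+1}=0$. For $y\in\mathbb{R}^{N+1}$, $\nu\in\mathbb{R}^{N+1}$, $\alpha=(\alpha_0,\dots,\alpha_{N+1})\in\mathbb{R}^{N+2}$ let $w^\zeta(y,\nu,\alpha)=\frac L2\|y+\nu-\sum_{i=0}^{N+1}\alpha_i(x_i-\frac1Lg_i)\|^2+\sum_{i=0}^{N+1}\alpha_i(f_i-\frac1{2L}\|g_i\|^2)$, and $W^\zeta(y)=\min\{w^\zeta(y,\nu,\alpha):\nu\in\mathbb{R}^{N+1}_+,\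 \alpha\in\Delta_{N+2}\}$, where $\mathbb{R}^{N+1}_+$ is the nonnegative orthant and $\Delta_{N+2}=\{\alpha\in\mathbb{R}^{N+2}:\alpha_i\geq0,\ \sum_i\alpha_i=1\}$. ($W^\zeta$ is differentiable.) *)

theory Defs
  imports "HOL-Analysis.Analysis"
begin

text \<open>Vectors of R^(N+1) are represented as functions nat => real; only the
components 0..N matter. zeta is a function nat => real, relevant on 0..N+2.\<close>

definition xvec :: "(nat \<Rightarrow> real) \<Rightarrow> nat \<Rightarrow> nat \<Rightarrow> real" where
  "xvec \<zeta> i j = (if j < i then - ((\<zeta> j - \<zeta> (Suc i)) / sqrt (\<zeta> j - \<zeta> (Suc j))) else 0)"

definition gvec :: "real \<Rightarrow> (nat \<Rightarrow> real) \<Rightarrow> nat \<Rightarrow> nat \<Rightarrow> nat \<Rightarrow> real" where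
  "gvec L \<zeta> N i j = (if i \<le> N \<and> j = i then L * sqrt (\<zeta> i - \<zeta> (Suc i)) else 0)"

definition fval :: "real \<Rightarrow> (nat \<Rightarrow> real) \<Rightarrow> nat \<Rightarrow> nat \<Rightarrow> real" where
  "fval L \<zeta> N i = (if i \<le> N then L / 2 * (\<zeta> i + \<zeta> (Suc i)) else 0)"

definition wz :: "real \<Rightarrow> (nat \<Rightarrow> real) \<Rightarrow> nat \<Rightarrow> (nat \<Rightarrow> real) \<Rightarrow> (nat \<Rightarrow> real) \<Rightarrow> (nat \<Rightarrow> real) \<Rightarrow> real" where
  "wz L \<zeta> N y \<nu> \<alpha> =
     L / 2 * (\<Sum>j\<in>{0..N}. (y j + \<nu> j - (\<Sum>i\<in>{0..N+1}. \<alpha> i * (xvec \<zeta> i j - gvec L \<zeta> N i j / L)))\<^sup>2)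
     + (\<Sum>i\<in>{0..N+1}. \<alpha> i * (fval L \<zeta> N i - (\<Sum>j\<in>{0..N}. (gvec L \<zeta> N i j)\<^sup>2) / (2 * L)))"

definition Wz :: "real \<Rightarrow> (nat \<Rightarrow> real) \<Rightarrow> nat \<Rightarrow> (nat \<Rightarrow> real) \<Rightarrow> real" where
  "Wz L \<zeta> N y = Inf {wz L \<zeta> N y \<nu> \<alpha> | \<nu> \<alpha>.
      (\<forall>j\<le>N. 0 \<le> \<nu> j) \<and> (\<forall>i\<le>N+1. 0 \<le> \<alpha> i) \<and> (\<Sum>i\<in>{0..N+1}. \<alpha> i) = 1}"

end

theory Submission
  imports Defs
begin

text \<open>Minimising first over \<nu> replaces \<open>y + \<nu> - z\<close> by its positive part \<open>r = max (y - z) 0\<close>,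
  where \<open>z = \<Sigma> \<alpha>\<^sub>i (x\<^sub>i - g\<^sub>i/L)\<close>, so \<open>W\<^sup>\<zeta>(y)\<close> is the minimum over the simplex of
  \<open>V(y,\<alpha>) = L/2 \<parallel>r\<parallel>\<^sup>2 + \<Sigma> \<alpha>\<^sub>i c\<^sub>i\<close>. The partial derivative of \<open>V\<close> in \<open>y\<^sub>n\<close> is \<open>L r\<^sub>n\<close>, so it suffices
  that \<open>r\<^sub>n = 0\<close> at every minimiser \<open>\<alpha>\<close>. This follows from the first-order conditions: the
  partials \<open>\<partial>V/\<partial>\<alpha>\<^sub>i\<close> are minimal on the support of \<open>\<alpha>\<close>, and for this particular \<open>\<zeta>\<close>-geometry
  their consecutive differences have the sign of \<open>\<Sigma>\<^sub>j\<^sub>\<le>\<^sub>i r\<^sub>j/\<surd>(\<zeta>\<^sub>j-\<zeta>\<^sub>j\<^sub>+\<^sub>1) - 1\<close>; if \<open>r\<^sub>n > 0\<close>,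
  the coordinate \<open>y\<^sub>k \<ge> 0\<close> (or a support point below \<open>k\<close>) already pushes this cumulative sum to
  at least 1 before index \<open>n\<close>, contradicting minimality at a support point \<open>\<ge> n\<close>.
  Then \<open>W(y + t e\<^sub>n)\<close> differs from \<open>W(y)\<close> by at most \<open>L t\<^sup>2/2\<close>.\<close>

section \<open>An abstract simplex-constrained objective\<close>

text \<open>Weights vanish beyond \<open>N+1\<close> so that the simplex is compact in \<open>nat \<Rightarrow> real\<close>.\<close>

definition stdsimplex :: "nat \<Rightarrow> (nat \<Rightarrow> real) set" where
  "stdsimplex N = {\<alpha>. (\<forall>i\<le>N+1. 0 \<le> \<alpha> i) \<and> (\<forall>i>N+1. \<alpha> i = 0) \<and> (\<Sum>i\<in>{0..N+1}. \<alpha> i) = 1}"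

definition comb :: "(nat \<Rightarrow> nat \<Rightarrow> real) \<Rightarrow> nat \<Rightarrow> (nat \<Rightarrow> real) \<Rightarrow> nat \<Rightarrow> real" where
  "comb M N \<alpha> j = (\<Sum>i\<in>{0..N+1}. \<alpha> i * M i j)"

definition resid :: "(nat \<Rightarrow> nat \<Rightarrow> real) \<Rightarrow> nat \<Rightarrow> (nat \<Rightarrow> real) \<Rightarrow> (nat \<Rightarrow> real) \<Rightarrow> nat \<Rightarrow> real" where
  "resid M N y \<alpha> j = max (y j - comb M N \<alpha> j) 0"

definition vobj :: "real \<Rightarrow> (nat \<Rightarrow> nat \<Rightarrow> real) \<Rightarrow> (nat \<Rightarrow> real) \<Rightarrow> nat \<Rightarrow> (nat \<Rightarrow> real) \<Rightarrow> (nat \<Rightarrow> real) \<Rightarrow> real" where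
  "vobj L M c N y \<alpha> = L / 2 * (\<Sum>j\<in>{0..N}. (resid M N y \<alpha> j)\<^sup>2) + (\<Sum>i\<in>{0..N+1}. \<alpha> i * c i)"

definition vobj_partial :: "real \<Rightarrow> (nat \<Rightarrow> nat \<Rightarrow> real) \<Rightarrow> (nat \<Rightarrow> real) \<Rightarrow> nat \<Rightarrow> (nat \<Rightarrow> real) \<Rightarrow> (nat \<Rightarrow> real) \<Rightarrow> nat \<Rightarrow> real" where
  "vobj_partial L M c N y \<alpha> i = c i - L * (\<Sum>j\<in>{0..N}. M i j * resid M N y \<alpha> j)"

definition is_vobj_min :: "real \<Rightarrow> (nat \<Rightarrow> nat \<Rightarrow> real) \<Rightarrow> (nat \<Rightarrow> real) \<Rightarrow> nat \<Rightarrow> (nat \<Rightarrow> real) \<Rightarrow> (nat \<Rightarrow> real) \<Rightarrow> bool" where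
  "is_vobj_min L M c N y a \<longleftrightarrow> a \<in> stdsimplex N \<and> (\<forall>\<alpha>\<in>stdsimplex N. vobj L M c N y a \<le> vobj L M c N y \<alpha>)"

lemma continuous_on_coordinate [continuous_intros]: "continuous_on S (\<lambda>x::nat \<Rightarrow> real. x i)"
  by (rule continuous_on_subset[OF continuous_on_product_coordinates]) simp

lemma closed_stdsimplex: "closed (stdsimplex N)"
proof -
  have "stdsimplex N = (\<Inter>i\<in>{..N+1}. {\<alpha>. 0 \<le> \<alpha> i}) \<inter> (\<Inter>i\<in>{N+1<..}. {\<alpha>. \<alpha> i = 0})
      \<inter> {\<alpha>. (\<Sum>i\<in>{0..N+1}. \<alpha> i) = 1}"
    unfolding stdsimplex_def by auto
  then show ?thesis
    by (simp only:) (intro closed_Int closed_INT ballI closed_Collect_le closed_Collect_eq continuous_intros)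
qed

lemma compact_stdsimplex: "compact (stdsimplex N)"
proof -
  define B where "B i = (if i \<le> N+1 then {0..1::real} else {0})" for i
  have "compactin (product_topology (\<lambda>i. euclidean) UNIV) (PiE UNIV B)"
    by (subst compactin_PiE) (auto simp: B_def)
  then have "compact (PiE UNIV B)"
    by (simp add: euclidean_product_topology)
  moreover have "stdsimplex N \<subseteq> PiE UNIV B"
  proof
    fix \<alpha> assume \<alpha>: "\<alpha> \<in> stdsimplex N"
    have "\<alpha> i \<le> (\<Sum>i\<in>{0..N+1}. \<alpha> i)" if "i \<le> N+1" for i
      by (rule member_le_sum) (use \<alpha> that in \<open>auto simp: stdsimplex_def\<close>)
    then have "\<alpha> i \<in> B i" for i
      using \<alpha> by (auto simp: B_def stdsimplex_def)
    then show "\<alpha> \<in> PiE UNIV B" by auto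
  qed
  ultimately show ?thesis
    by (metis closed_stdsimplex compact_Int_closed inf.absorb_iff2)
qed

lemma vobj_min_exists: "\<exists>a. is_vobj_min L M c N y a"
proof -
  have "(\<lambda>i. of_bool (i = 0)) \<in> stdsimplex N"
    unfolding stdsimplex_def by auto
  moreover have "continuous_on (stdsimplex N) (vobj L M c N y)"
    unfolding vobj_def resid_def comb_def by (intro continuous_intros)
  ultimately show ?thesis
    using continuous_attains_inf[OF compact_stdsimplex] unfolding is_vobj_min_def by blast
qed

lemma sum_move_mass:
  assumes "finite S" "i1 \<in> S" "i2 \<in> S"
  shows "(\<Sum>i\<in>S. (a i + \<epsilon> * (of_bool (i = i2) - of_bool (i = i1))) * f i)
    = (\<Sum>i\<in>S. a i * f i) + \<epsilon> * (f i2 - f i1 :: real)"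
  using assms by (simp add: algebra_simps sum.distrib sum_subtractf flip: sum_distrib_left)

lemma sq_pos_part_diff_le: "(max (w - x) 0)\<^sup>2 \<le> (max w 0 - x)\<^sup>2" for w x :: real
proof (cases "0 \<le> w - x")
  case True
  then show ?thesis
  proof (cases "0 \<le> w")
    case False
    with True have "0 \<le> w - x" "w - x \<le> - x" by auto
    then have "(w - x)\<^sup>2 \<le> (- x)\<^sup>2" by (intro power_mono) auto
    with True False show ?thesis by (simp add: max_def)
  qed (simp add: max_def)
qed (simp add: max_def)

text \<open>First-order optimality: moving weight \<open>\<epsilon>\<close> from \<open>i\<^sub>1\<close> to \<open>i\<^sub>2\<close> changes \<open>vobj\<close> by at most
  \<open>-\<epsilon> (\<partial>\<^sub>i\<^sub>1 - \<partial>\<^sub>i\<^sub>2) + L \<epsilon>\<^sup>2 Q/2\<close>, because the positive part is 1-Lipschitz.\<close>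

lemma vobj_partial_min_on_support:
  assumes L: "L > 0" and a: "is_vobj_min L M c N y a"
    and i1: "i1 \<le> N+1" "0 < a i1" and i2: "i2 \<le> N+1"
  shows "vobj_partial L M c N y a i1 \<le> vobj_partial L M c N y a i2"
proof (rule ccontr)
  define g where "g = vobj_partial L M c N y a i1 - vobj_partial L M c N y a i2"
  assume "\<not> ?thesis"
  then have g0: "0 < g" unfolding g_def by simp
  define r where "r = resid M N y a"
  define \<delta> where "\<delta> j = M i2 j - M i1 j" for j
  define Q where "Q = (\<Sum>j\<in>{0..N}. (\<delta> j)\<^sup>2)"
  define \<epsilon> where "\<epsilon> = min (a i1) (g / (L * Q + 1))"
  define a' where "a' i = a i + \<epsilon> * (of_bool (i = i2) - of_bool (i = i1))" for i
  have LQ: "0 < L * Q + 1"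
    using L by (intro add_nonneg_pos mult_nonneg_nonneg) (auto simp: Q_def intro: sum_nonneg)
  have "\<epsilon> \<le> g / (L * Q + 1)"
    by (simp add: \<epsilon>_def)
  then have "\<epsilon> * (L * Q + 1) \<le> g"
    using LQ by (simp add: pos_le_divide_eq)
  then have \<epsilon>: "0 < \<epsilon>" "\<epsilon> \<le> a i1" "\<epsilon> * (L * Q + 1) \<le> g"
    using i1 g0 LQ by (auto simp: \<epsilon>_def)
  have S: "finite {0..N+1}" "i1 \<in> {0..N+1}" "i2 \<in> {0..N+1}"
    using i1 i2 by auto
  have comb_a': "comb M N a' j = comb M N a j + \<epsilon> * \<delta> j" for j
    unfolding comb_def a'_def \<delta>_def by (rule sum_move_mass[OF S])
  have "(\<Sum>i\<in>{0..N+1}. a' i) = (\<Sum>i\<in>{0..N+1}. a i)"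
    using sum_move_mass[OF S, of a \<epsilon> "\<lambda>_. 1"] by (simp add: a'_def)
  then have a'_simplex: "a' \<in> stdsimplex N"
    using a \<epsilon> i1 i2 by (auto simp: is_vobj_min_def stdsimplex_def a'_def)
  have "(resid M N y a' j)\<^sup>2 \<le> (r j - \<epsilon> * \<delta> j)\<^sup>2" for j
    using sq_pos_part_diff_le[of "y j - comb M N a j" "\<epsilon> * \<delta> j"]
    by (simp add: resid_def r_def comb_a' diff_diff_eq add.commute)
  then have "(\<Sum>j\<in>{0..N}. (resid M N y a' j)\<^sup>2) \<le> (\<Sum>j\<in>{0..N}. (r j - \<epsilon> * \<delta> j)\<^sup>2)"
    by (intro sum_mono)
  also have "\<dots> = (\<Sum>j\<in>{0..N}. (r j)\<^sup>2) - 2 * \<epsilon> * (\<Sum>j\<in>{0..N}. \<delta> j * r j) + \<epsilon>\<^sup>2 * Q"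
    by (simp add: Q_def power2_diff power_mult_distrib sum.distrib sum_subtractf sum_distrib_left
        algebra_simps)
  finally have resid_a': "(\<Sum>j\<in>{0..N}. (resid M N y a' j)\<^sup>2)
      \<le> (\<Sum>j\<in>{0..N}. (r j)\<^sup>2) - 2 * \<epsilon> * (\<Sum>j\<in>{0..N}. \<delta> j * r j) + \<epsilon>\<^sup>2 * Q" .
  have g_eq: "g = c i1 - c i2 + L * (\<Sum>j\<in>{0..N}. \<delta> j * r j)"
    by (simp add: g_def vobj_partial_def \<delta>_def r_def left_diff_distrib sum_subtractf algebra_simps)
  have "(\<Sum>i\<in>{0..N+1}. a' i * c i) = (\<Sum>i\<in>{0..N+1}. a i * c i) + \<epsilon> * (c i2 - c i1)"
    unfolding a'_def by (rule sum_move_mass[OF S])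
  then have "vobj L M c N y a' \<le> L / 2 * ((\<Sum>j\<in>{0..N}. (r j)\<^sup>2) - 2 * \<epsilon> * (\<Sum>j\<in>{0..N}. \<delta> j * r j)
      + \<epsilon>\<^sup>2 * Q) + ((\<Sum>i\<in>{0..N+1}. a i * c i) + \<epsilon> * (c i2 - c i1))"
    using mult_left_mono[OF resid_a', of "L / 2"] L by (simp add: vobj_def)
  also have "\<dots> = vobj L M c N y a - \<epsilon> * g + L / 2 * \<epsilon>\<^sup>2 * Q"
    unfolding g_eq by (simp add: vobj_def r_def algebra_simps)
  also have "\<dots> < vobj L M c N y a"
  proof -
    have "\<epsilon> * (L * Q) \<le> g"
      using \<epsilon>(1,3) by (simp add: algebra_simps)
    then have "\<epsilon> * (\<epsilon> * (L * Q)) \<le> \<epsilon> * g"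
      using \<epsilon>(1) by (intro mult_left_mono) auto
    then have "L / 2 * \<epsilon>\<^sup>2 * Q \<le> \<epsilon> * g / 2"
      by (simp add: power2_eq_square algebra_simps)
    moreover have "0 < \<epsilon> * g"
      using \<epsilon>(1) g0 by simp
    ultimately show ?thesis by linarith
  qed
  finally show False
    using a a'_simplex by (auto simp: is_vobj_min_def not_le[symmetric])
qed

lemma vobj_shift_coordinate:
  assumes "y n = 0" "n \<le> N"
  shows "vobj L M c N (\<lambda>j. y j + (if j = n then t else 0)) \<alpha> = vobj L M c N y \<alpha>
     + L / 2 * ((max (t - comb M N \<alpha> n) 0)\<^sup>2 - (max (- comb M N \<alpha> n) 0)\<^sup>2)"
proof -
  define f where "f s j = (max (y j + (if j = n then s else 0) - comb M N \<alpha> j) 0)\<^sup>2" for s j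
  have "(\<Sum>j\<in>{0..N}. f t j) = (\<Sum>j\<in>{0..N}. f 0 j + of_bool (j = n) * (f t n - f 0 n))"
    by (rule sum.cong) (auto simp: f_def)
  then have "(\<Sum>j\<in>{0..N}. f t j) = (\<Sum>j\<in>{0..N}. f 0 j) + (f t n - f 0 n)"
    using assms(2) by (simp add: sum.distrib)
  then have "L / 2 * (\<Sum>j\<in>{0..N}. f t j) = L / 2 * (\<Sum>j\<in>{0..N}. f 0 j) + L / 2 * (f t n - f 0 n)"
    by (simp add: distrib_left)
  then show ?thesis
    using assms(1) by (simp add: vobj_def resid_def f_def)
qed

section \<open>Elimination of \<nu>\<close>

definition pvec :: "real \<Rightarrow> (nat \<Rightarrow> real) \<Rightarrow> nat \<Rightarrow> nat \<Rightarrow> nat \<Rightarrow> real" where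
  "pvec L \<zeta> N i j = xvec \<zeta> i j - gvec L \<zeta> N i j / L"

definition cval :: "real \<Rightarrow> (nat \<Rightarrow> real) \<Rightarrow> nat \<Rightarrow> nat \<Rightarrow> real" where
  "cval L \<zeta> N i = fval L \<zeta> N i - (\<Sum>j\<in>{0..N}. (gvec L \<zeta> N i j)\<^sup>2) / (2 * L)"

lemma wz_eq_comb:
  "wz L \<zeta> N y \<nu> \<alpha> = L / 2 * (\<Sum>j\<in>{0..N}. (y j + \<nu> j - comb (pvec L \<zeta> N) N \<alpha> j)\<^sup>2)
     + (\<Sum>i\<in>{0..N+1}. \<alpha> i * cval L \<zeta> N i)"
  unfolding wz_def comb_def pvec_def cval_def by simp

lemma vobj_le_wz:
  assumes "L > 0" "\<forall>j\<le>N. 0 \<le> \<nu> j"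
  shows "vobj L (pvec L \<zeta> N) (cval L \<zeta> N) N y \<alpha> \<le> wz L \<zeta> N y \<nu> \<alpha>"
proof -
  have "(resid (pvec L \<zeta> N) N y \<alpha> j)\<^sup>2 \<le> (y j + \<nu> j - comb (pvec L \<zeta> N) N \<alpha> j)\<^sup>2" if "j \<le> N" for j
    using assms(2) that by (cases "0 \<le> y j - comb (pvec L \<zeta> N) N \<alpha> j") (auto simp: resid_def intro: power_mono)
  then show ?thesis
    using assms(1) by (auto simp: wz_eq_comb vobj_def intro!: mult_left_mono sum_mono)
qed

lemma wz_optimal_nu:
  "wz L \<zeta> N y (\<lambda>j. max (comb (pvec L \<zeta> N) N \<alpha> j - y j) 0) \<alpha> = vobj L (pvec L \<zeta> N) (cval L \<zeta> N) N y \<alpha>"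
proof -
  have "y j + max (comb (pvec L \<zeta> N) N \<alpha> j - y j) 0 - comb (pvec L \<zeta> N) N \<alpha> j
      = resid (pvec L \<zeta> N) N y \<alpha> j" for j
    by (simp add: resid_def max_def)
  then show ?thesis by (simp add: wz_eq_comb vobj_def)
qed

lemma Wz_eq_vobj_min:
  assumes "L > 0" "is_vobj_min L (pvec L \<zeta> N) (cval L \<zeta> N) N y a"
  shows "Wz L \<zeta> N y = vobj L (pvec L \<zeta> N) (cval L \<zeta> N) N y a"
  unfolding Wz_def
proof (rule cInf_eq_minimum)
  show "vobj L (pvec L \<zeta> N) (cval L \<zeta> N) N y a \<in> {wz L \<zeta> N y \<nu> \<alpha> |\<nu> \<alpha>.
      (\<forall>j\<le>N. 0 \<le> \<nu> j) \<and> (\<forall>i\<le>N + 1. 0 \<le> \<alpha> i) \<and> sum \<alpha> {0..N + 1} = 1}"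
    using assms(2) wz_optimal_nu[of L \<zeta> N y a] unfolding is_vobj_min_def stdsimplex_def
    by (intro CollectI exI[where x = "\<lambda>j. max (comb (pvec L \<zeta> N) N a j - y j) 0"] exI[where x = a]) auto
next
  fix x assume "x \<in> {wz L \<zeta> N y \<nu> \<alpha> |\<nu> \<alpha>.
      (\<forall>j\<le>N. 0 \<le> \<nu> j) \<and> (\<forall>i\<le>N + 1. 0 \<le> \<alpha> i) \<and> sum \<alpha> {0..N + 1} = 1}"
  then obtain \<nu> \<alpha> where x: "x = wz L \<zeta> N y \<nu> \<alpha>" and \<nu>: "\<forall>j\<le>N. 0 \<le> \<nu> j"
    and \<alpha>: "\<forall>i\<le>N + 1. 0 \<le> \<alpha> i" "sum \<alpha> {0..N + 1} = 1"
    by blast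
  define \<alpha>' where "\<alpha>' i = (if i \<le> N+1 then \<alpha> i else 0)" for i
  have "\<alpha>' \<in> stdsimplex N"
    using \<alpha> by (simp add: stdsimplex_def \<alpha>'_def)
  then have "vobj L (pvec L \<zeta> N) (cval L \<zeta> N) N y a \<le> vobj L (pvec L \<zeta> N) (cval L \<zeta> N) N y \<alpha>'"
    using assms(2) unfolding is_vobj_min_def by blast
  also have "\<dots> = vobj L (pvec L \<zeta> N) (cval L \<zeta> N) N y \<alpha>"
    by (simp add: vobj_def resid_def comb_def \<alpha>'_def)
  also have "\<dots> \<le> x"
    using vobj_le_wz[OF assms(1) \<nu>] x by simp
  finally show "vobj L (pvec L \<zeta> N) (cval L \<zeta> N) N y a \<le> x" .
qed

section \<open>The residual vanishes at coordinate \<open>n\<close>\<close>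

context
  fixes L :: real and \<zeta> :: "nat \<Rightarrow> real" and N :: nat
  assumes L_pos: "L > 0" and \<zeta>_decr: "\<forall>i\<le>N+1. \<zeta> (Suc i) < \<zeta> i" and \<zeta>_last: "\<zeta> (N+2) = 0"
begin

lemma gap_pos: "j \<le> N+1 \<Longrightarrow> 0 < \<zeta> j - \<zeta> (Suc j)"
  using \<zeta>_decr by auto

lemma \<zeta>_antimono: "i \<le> j \<Longrightarrow> j \<le> N+2 \<Longrightarrow> \<zeta> j \<le> \<zeta> i"
proof (induction j rule: dec_induct)
  case (step j)
  then show ?case using \<zeta>_decr by fastforce
qed simp

lemma pvec_eq:
  assumes "i \<le> N+1" "j \<le> N"
  shows "pvec L \<zeta> N i j = of_bool (j \<le> i) * (\<zeta> (Suc i) - \<zeta> j) / sqrt (\<zeta> j - \<zeta> (Suc j))"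
proof -
  have "- sqrt (\<zeta> i - \<zeta> (Suc i)) = (\<zeta> (Suc i) - \<zeta> i) / sqrt (\<zeta> i - \<zeta> (Suc i))"
    using gap_pos[of i] assms by (smt (verit) minus_divide_left real_div_sqrt)
  then show ?thesis
    using assms L_pos
    by (cases j i rule: linorder_cases) (auto simp: pvec_def xvec_def gvec_def minus_divide_left)
qed

lemma cval_eq: "i \<le> N+1 \<Longrightarrow> cval L \<zeta> N i = L * \<zeta> (Suc i)"
proof (cases "i \<le> N")
  case True
  have "(\<Sum>j\<in>{0..N}. (gvec L \<zeta> N i j)\<^sup>2) = (\<Sum>j\<in>{0..N}. of_bool (j = i) * (L * sqrt (\<zeta> i - \<zeta> (Suc i)))\<^sup>2)"
    by (rule sum.cong) (auto simp: gvec_def True)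
  also have "\<dots> = L\<^sup>2 * (\<zeta> i - \<zeta> (Suc i))"
    using True gap_pos[of i] by (simp add: power_mult_distrib)
  finally show ?thesis
    using True L_pos by (simp add: cval_def fval_def power2_eq_square field_simps)
next
  case False
  moreover assume "i \<le> N+1"
  ultimately have "i = N+1" by simp
  then show ?thesis
    using \<zeta>_last by (simp add: cval_def fval_def gvec_def)
qed

definition scaled_resid :: "(nat \<Rightarrow> real) \<Rightarrow> (nat \<Rightarrow> real) \<Rightarrow> nat \<Rightarrow> real" where
  "scaled_resid y a j = resid (pvec L \<zeta> N) N y a j / sqrt (\<zeta> j - \<zeta> (Suc j))"

definition cum_scaled_resid :: "(nat \<Rightarrow> real) \<Rightarrow> (nat \<Rightarrow> real) \<Rightarrow> nat \<Rightarrow> real" where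
  "cum_scaled_resid y a i = (\<Sum>j\<in>{0..N}. of_bool (j \<le> i) * scaled_resid y a j)"

lemma scaled_resid_nonneg: "j \<le> N \<Longrightarrow> 0 \<le> scaled_resid y a j"
  using gap_pos[of j] by (simp add: scaled_resid_def resid_def)

lemma vobj_partial_eq:
  assumes "i \<le> N+1"
  shows "vobj_partial L (pvec L \<zeta> N) (cval L \<zeta> N) N y a i
    = L * \<zeta> (Suc i) + L * (\<Sum>j\<in>{0..N}. of_bool (j \<le> i) * scaled_resid y a j * (\<zeta> j - \<zeta> (Suc i)))"
proof -
  have "(\<Sum>j\<in>{0..N}. pvec L \<zeta> N i j * resid (pvec L \<zeta> N) N y a j)
      = - (\<Sum>j\<in>{0..N}. of_bool (j \<le> i) * scaled_resid y a j * (\<zeta> j - \<zeta> (Suc i)))"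
    unfolding sum_negf[symmetric] using assms gap_pos
    by (intro sum.cong) (auto simp: pvec_eq scaled_resid_def field_simps minus_divide_left)
  then show ?thesis
    using assms by (simp add: vobj_partial_def cval_eq)
qed

lemma vobj_partial_Suc_diff:
  assumes "m \<le> N"
  shows "vobj_partial L (pvec L \<zeta> N) (cval L \<zeta> N) N y a (Suc m) - vobj_partial L (pvec L \<zeta> N) (cval L \<zeta> N) N y a m
    = L * (\<zeta> (Suc m) - \<zeta> (Suc (Suc m))) * (cum_scaled_resid y a (Suc m) - 1)"
proof -
  define S where "S i = (\<Sum>j\<in>{0..N}. of_bool (j \<le> i) * scaled_resid y a j * (\<zeta> j - \<zeta> (Suc i)))" for i
  have "S (Suc m) - S m = (\<Sum>j\<in>{0..N}. (\<zeta> (Suc m) - \<zeta> (Suc (Suc m))) * (of_bool (j \<le> Suc m) * scaled_resid y a j))"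
    unfolding S_def sum_subtractf[symmetric] by (rule sum.cong) (auto simp: algebra_simps le_Suc_eq)
  also have "\<dots> = (\<zeta> (Suc m) - \<zeta> (Suc (Suc m))) * cum_scaled_resid y a (Suc m)"
    by (simp only: cum_scaled_resid_def sum_distrib_left)
  finally have S_diff: "S (Suc m) - S m = (\<zeta> (Suc m) - \<zeta> (Suc (Suc m))) * cum_scaled_resid y a (Suc m)" .
  have "vobj_partial L (pvec L \<zeta> N) (cval L \<zeta> N) N y a (Suc m) - vobj_partial L (pvec L \<zeta> N) (cval L \<zeta> N) N y a m
      = L * (S (Suc m) - S m) - L * (\<zeta> (Suc m) - \<zeta> (Suc (Suc m)))"
    using assms vobj_partial_eq[where i = m and y = y and a = a, folded S_def]
      vobj_partial_eq[where i = "Suc m" and y = y and a = a, folded S_def]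
    by (simp add: algebra_simps)
  then show ?thesis
    unfolding S_diff by (simp add: algebra_simps)
qed

lemma cum_scaled_resid_le_one:
  assumes "is_vobj_min L (pvec L \<zeta> N) (cval L \<zeta> N) N y a" "m \<le> N" "0 < a (Suc m)"
  shows "cum_scaled_resid y a (Suc m) \<le> 1"
proof -
  have "vobj_partial L (pvec L \<zeta> N) (cval L \<zeta> N) N y a (Suc m) \<le> vobj_partial L (pvec L \<zeta> N) (cval L \<zeta> N) N y a m"
    using assms by (intro vobj_partial_min_on_support[OF L_pos]) auto
  then have "L * (\<zeta> (Suc m) - \<zeta> (Suc (Suc m))) * (cum_scaled_resid y a (Suc m) - 1) \<le> 0"
    using vobj_partial_Suc_diff[OF assms(2), where y = y and a = a] by linarith
  moreover have "0 < L * (\<zeta> (Suc m) - \<zeta> (Suc (Suc m)))"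
    using L_pos gap_pos[of "Suc m"] assms(2) by simp
  ultimately show ?thesis by (metis mult_le_cancel_left_pos mult_zero_right diff_le_0_iff_le)
qed

lemma cum_scaled_resid_ge_one:
  assumes "is_vobj_min L (pvec L \<zeta> N) (cval L \<zeta> N) N y a" "h \<le> N" "0 < a h"
  shows "1 \<le> cum_scaled_resid y a (Suc h)"
proof -
  have "vobj_partial L (pvec L \<zeta> N) (cval L \<zeta> N) N y a h \<le> vobj_partial L (pvec L \<zeta> N) (cval L \<zeta> N) N y a (Suc h)"
    using assms by (intro vobj_partial_min_on_support[OF L_pos]) auto
  then have "0 \<le> L * (\<zeta> (Suc h) - \<zeta> (Suc (Suc h))) * (cum_scaled_resid y a (Suc h) - 1)"
    using vobj_partial_Suc_diff[OF assms(2), where y = y and a = a] by linarith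
  moreover have "0 < L * (\<zeta> (Suc h) - \<zeta> (Suc (Suc h)))"
    using L_pos gap_pos[of "Suc h"] assms(2) by simp
  ultimately show ?thesis by (simp add: zero_le_mult_iff)
qed

text \<open>Without weight below \<open>k\<close>, \<open>-z\<^sub>k\<close> is an average of the values \<open>(\<zeta>\<^sub>k - \<zeta>\<^sub>i\<^sub>+\<^sub>1)/\<surd>(\<zeta>\<^sub>k - \<zeta>\<^sub>k\<^sub>+\<^sub>1)\<close>
  with \<open>i \<ge> k\<close>, each at least \<open>\<surd>(\<zeta>\<^sub>k - \<zeta>\<^sub>k\<^sub>+\<^sub>1)\<close>.\<close>

lemma scaled_resid_ge_one:
  assumes a: "a \<in> stdsimplex N" and k: "k \<le> N" "\<forall>h<k. a h = 0" and yk: "0 \<le> y k"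
  shows "1 \<le> scaled_resid y a k"
proof -
  have dk: "0 < \<zeta> k - \<zeta> (Suc k)"
    using gap_pos k by simp
  have "sqrt (\<zeta> k - \<zeta> (Suc k)) = (\<Sum>i\<in>{0..N+1}. a i * sqrt (\<zeta> k - \<zeta> (Suc k)))"
    using a by (simp add: stdsimplex_def flip: sum_distrib_right)
  also have "\<dots> \<le> (\<Sum>i\<in>{0..N+1}. a i * - pvec L \<zeta> N i k)"
  proof (rule sum_mono)
    fix i assume i: "i \<in> {0..N+1}"
    show "a i * sqrt (\<zeta> k - \<zeta> (Suc k)) \<le> a i * - pvec L \<zeta> N i k"
    proof (cases "i < k")
      case False
      then have "\<zeta> (Suc i) \<le> \<zeta> (Suc k)"
        using \<zeta>_antimono i by auto
      then have "(\<zeta> k - \<zeta> (Suc k)) / sqrt (\<zeta> k - \<zeta> (Suc k)) \<le> (\<zeta> k - \<zeta> (Suc i)) / sqrt (\<zeta> k - \<zeta> (Suc k))"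
        using dk by (intro divide_right_mono) auto
      then show ?thesis
        using a i k False dk by (intro mult_left_mono) (auto simp: pvec_eq real_div_sqrt stdsimplex_def minus_divide_left)
    qed (use k in simp)
  qed
  also have "\<dots> \<le> resid (pvec L \<zeta> N) N y a k"
    using yk by (simp add: resid_def comb_def sum_negf)
  finally show ?thesis
    using dk by (simp add: scaled_resid_def le_divide_eq)
qed

lemma vobj_min_resid_eq_zero:
  assumes kn: "k < n" "n \<le> N" and yk: "0 \<le> y k" and yn: "y n \<le> 0"
    and a: "is_vobj_min L (pvec L \<zeta> N) (cval L \<zeta> N) N y a"
  shows "resid (pvec L \<zeta> N) N y a n = 0"
proof (rule ccontr)
  assume "\<not> ?thesis"
  then have lt: "comb (pvec L \<zeta> N) N a n < y n"
    by (simp add: resid_def max_def split: if_splits)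
  then have rn: "0 < scaled_resid y a n"
    using gap_pos[of n] kn by (simp add: scaled_resid_def resid_def)
  have a_simplex: "a \<in> stdsimplex N" and a_nonneg: "\<forall>i\<le>N+1. 0 \<le> a i"
    using a by (auto simp: is_vobj_min_def stdsimplex_def)
  have "\<exists>i. n \<le> i \<and> i \<le> N+1 \<and> 0 < a i"
  proof (rule ccontr)
    assume "\<not> ?thesis"
    then have "a i * pvec L \<zeta> N i n = 0" if "i \<le> N+1" for i
      using a_nonneg that kn by (cases "n \<le> i") (force simp: pvec_eq)+
    then have "comb (pvec L \<zeta> N) N a n = 0"
      unfolding comb_def by (intro sum.neutral) auto
    with lt yn show False by simp
  qed
  then obtain i where i: "n \<le> i" "i \<le> N+1" "0 < a i"
    by blast
  then obtain m where "i = Suc m"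
    using kn by (cases i) auto
  with i have m: "n \<le> Suc m" "m \<le> N" "0 < a (Suc m)"
    by auto
  have "1 + scaled_resid y a n \<le> cum_scaled_resid y a (Suc m)"
  proof (cases "\<exists>h<k. 0 < a h")
    case True
    then obtain h where h: "h < k" "0 < a h" by blast
    have "cum_scaled_resid y a (Suc h) + scaled_resid y a n
        = (\<Sum>j\<in>{0..N}. of_bool (j \<le> Suc h) * scaled_resid y a j + of_bool (j = n) * scaled_resid y a j)"
      using kn by (simp add: cum_scaled_resid_def sum.distrib)
    also have "\<dots> \<le> cum_scaled_resid y a (Suc m)"
      unfolding cum_scaled_resid_def using h kn m scaled_resid_nonneg by (intro sum_mono) auto
    finally show ?thesis
      using cum_scaled_resid_ge_one[OF a, of h] h kn by linarith
  next
    case False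
    have "a h = 0" if "h < k" for h
    proof -
      have "0 \<le> a h" "\<not> 0 < a h"
        using False a_nonneg that kn by auto
      then show ?thesis by simp
    qed
    then have "1 \<le> scaled_resid y a k"
      using kn yk by (intro scaled_resid_ge_one[OF a_simplex]) auto
    moreover have "scaled_resid y a k + scaled_resid y a n
        = (\<Sum>j\<in>{0..N}. of_bool (j = k) * scaled_resid y a j + of_bool (j = n) * scaled_resid y a j)"
      using kn by (simp add: sum.distrib)
    moreover have "\<dots> \<le> cum_scaled_resid y a (Suc m)"
      unfolding cum_scaled_resid_def using kn m scaled_resid_nonneg by (intro sum_mono) auto
    ultimately show ?thesis by linarith
  qed
  then show False
    using cum_scaled_resid_le_one[OF a m(2,3)] rn by linarith
qed

end

section \<open>Differentiability\<close>

lemma Wz_shift_quadratic_bound: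
  assumes L: "L > 0" and \<zeta>: "\<forall>i\<le>N+1. \<zeta> (Suc i) < \<zeta> i" "\<zeta> (N+2) = 0"
    and kn: "k < n" "n \<le> N" and y: "0 \<le> y k" "y n = 0"
  shows "\<bar>Wz L \<zeta> N (\<lambda>j. y j + (if j = n then t else 0)) - Wz L \<zeta> N y\<bar> \<le> L / 2 * t\<^sup>2"
proof -
  define yt where "yt = (\<lambda>j. y j + (if j = n then t else 0))"
  let ?V = "vobj L (pvec L \<zeta> N) (cval L \<zeta> N) N"
  let ?z = "comb (pvec L \<zeta> N) N"
  obtain a where a: "is_vobj_min L (pvec L \<zeta> N) (cval L \<zeta> N) N y a"
    using vobj_min_exists by blast
  obtain b where b: "is_vobj_min L (pvec L \<zeta> N) (cval L \<zeta> N) N yt b"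
    using vobj_min_exists by blast
  have shift: "?V yt \<alpha> = ?V y \<alpha> + L / 2 * ((max (t - ?z \<alpha> n) 0)\<^sup>2 - (max (- ?z \<alpha> n) 0)\<^sup>2)" for \<alpha>
    unfolding yt_def using y kn by (intro vobj_shift_coordinate) auto
  have upper: "?V yt b \<le> ?V yt a" and lower: "?V y a \<le> ?V y b"
    using a b by (auto simp: is_vobj_min_def)
  have za: "0 \<le> ?z a n"
    using vobj_min_resid_eq_zero[OF L \<zeta> kn, of y a] a y by (simp add: resid_def)
  have "\<bar>?V yt b - ?V y a\<bar> \<le> L / 2 * t\<^sup>2"
  proof (cases "0 \<le> t")
    case True
    have "L / 2 * (max (t - ?z a n) 0)\<^sup>2 \<le> L / 2 * t\<^sup>2"
      using True za L by (intro mult_left_mono power_mono) auto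
    moreover have "0 \<le> L / 2 * ((max (t - ?z b n) 0)\<^sup>2 - (max (- ?z b n) 0)\<^sup>2)"
      using True L by (intro mult_nonneg_nonneg) (auto intro!: power_mono)
    ultimately show ?thesis
      using upper lower shift[of a] shift[of b] za by auto
  next
    case False
    have "yt n \<le> ?z b n"
      using vobj_min_resid_eq_zero[OF L \<zeta> kn, of yt b] b y False kn by (simp add: yt_def resid_def)
    then have zb: "t \<le> ?z b n"
      using y by (simp add: yt_def)
    have "(max (- ?z b n) 0)\<^sup>2 \<le> (- t)\<^sup>2"
      using zb False by (intro power_mono) auto
    then have "L / 2 * (max (- ?z b n) 0)\<^sup>2 \<le> L / 2 * t\<^sup>2"
      using L by (intro mult_left_mono) auto
    then show ?thesis
      using upper lower shift[of a] shift[of b] za zb False by auto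
  qed
  then show ?thesis
    using Wz_eq_vobj_min[OF L a] Wz_eq_vobj_min[OF L b] by (simp add: yt_def)
qed

lemma has_real_derivative_zero_if_quadratic_bound:
  fixes f :: "real \<Rightarrow> real"
  assumes "\<And>t. \<bar>f t - f 0\<bar> \<le> C * t\<^sup>2"
  shows "(f has_real_derivative 0) (at 0)"
  unfolding has_field_derivative_iff
proof (rule tendsto_0_le[where f = "\<lambda>t. t" and K = C])
  show "((\<lambda>t::real. t) \<longlongrightarrow> 0) (at 0)"
    by (rule tendsto_ident_at)
  have "\<bar>f t - f 0\<bar> / \<bar>t\<bar> \<le> \<bar>t\<bar> * C" for t
    using assms[of t] by (cases "t = 0") (simp_all add: divide_le_eq power2_eq_square abs_mult_self_eq algebra_simps)
  then show "\<forall>\<^sub>F t in at 0. norm ((f t - f 0) / (t - 0)) \<le> norm t * C"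
    by (intro always_eventually) (auto simp: abs_divide)
qed

theorem corollary3:
  fixes N k n :: nat and L :: real and \<zeta> ybar :: "nat \<Rightarrow> real"
  assumes "N \<ge> 1" and "L > 0"
    and "\<forall>i\<le>N+1. \<zeta> (Suc i) < \<zeta> i" and "\<zeta> (N+2) = 0"
    and "k < n" and "n \<le> N"
    and "ybar k \<ge> 0" and "ybar n = 0"
  shows "((\<lambda>t. Wz L \<zeta> N (\<lambda>j. ybar j + (if j = n then t else 0))) has_real_derivative 0) (at 0)"
proof (rule has_real_derivative_zero_if_quadratic_bound)
  fix t :: real
  have "ybar = (\<lambda>j. ybar j + (if j = n then 0 else 0))" by simp
  then show "\<bar>Wz L \<zeta> N (\<lambda>j. ybar j + (if j = n then t else 0))
      - Wz L \<zeta> N (\<lambda>j. ybar j + (if j = n then 0 else 0))\<bar> \<le> L / 2 * t\<^sup>2"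
    using Wz_shift_quadratic_bound[OF assms(2-8)] by simp
qed

end
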